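(* Let $k\geq 2$, let $A$ and $B$ be $d\times d$ matrices with entries in $\mathbb{Z}[1/2,\zeta_{2^{k-1}}]$, and assume that $A+B\zeta_{2^k}$ is unitary. Then the $2d\times 2d$ matrix $A\otimes I_2+B\otimes\Lambda_k$ is unitary (and has entries in $\mathbb{Z}[1/2,\zeta_{2^{k-1}}]$).
   Context: $\zeta_n=e^{2\pi i/n}$; $\mathbb{Z}[1/2,\zeta_n]$ is the smallest subring of $\mathbb{C}$ containing $1/2$ and $\zeta_n$. $\Lambda_k=\begin{bmatrix}0&1\\ \zeta_{2^{k-1}}&0\end{bmatrix}$. *)

theory Defs
  imports Complex_Main "Jordan_Normal_Form.Matrix"
begin

definition zeta :: "nat \<Rightarrow> complex" where
  "zeta n = exp (2 * of_real pi * \<i> / of_nat n)"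

inductive_set Zhalf_zeta :: "nat \<Rightarrow> complex set" for n :: nat where
  one: "1 \<in> Zhalf_zeta n"
| half: "1/2 \<in> Zhalf_zeta n"
| root: "zeta n \<in> Zhalf_zeta n"
| add: "x \<in> Zhalf_zeta n \<Longrightarrow> y \<in> Zhalf_zeta n \<Longrightarrow> x + y \<in> Zhalf_zeta n"
| neg: "x \<in> Zhalf_zeta n \<Longrightarrow> - x \<in> Zhalf_zeta n"
| mult: "x \<in> Zhalf_zeta n \<Longrightarrow> y \<in> Zhalf_zeta n \<Longrightarrow> x * y \<in> Zhalf_zeta n"

definition entries_in :: "'a mat \<Rightarrow> 'a set \<Rightarrow> bool" where
  "entries_in M S \<longleftrightarrow> (\<forall>i < dim_row M. \<forall>j < dim_col M. M $$ (i, j) \<in> S)"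

definition adjoint_mat :: "complex mat \<Rightarrow> complex mat" where
  "adjoint_mat M = map_mat cnj (transpose_mat M)"

definition unitary_mat :: "complex mat \<Rightarrow> bool" where
  "unitary_mat U \<longleftrightarrow> (\<exists>n. U \<in> carrier_mat n n \<and>
      adjoint_mat U * U = 1\<^sub>m n \<and> U * adjoint_mat U = 1\<^sub>m n)"

definition kron :: "'a::times mat \<Rightarrow> 'a mat \<Rightarrow> 'a mat" where
  "kron A B = mat (dim_row A * dim_row B) (dim_col A * dim_col B)
     (\<lambda>(i, j). A $$ (i div dim_row B, j div dim_col B) * B $$ (i mod dim_row B, j mod dim_col B))"

definition Lambda :: "nat \<Rightarrow> complex mat" where
  "Lambda k = mat 2 2 (\<lambda>(i, j). if i = 0 \<and> j = 1 then 1
                               else if i = 1 \<and> j = 0 then zeta (2 ^ (k - 1)) else 0)"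

end

theory Submission
  imports Defs "Jordan_Normal_Form.Determinant"
begin

text \<open>
  Write \<open>z = \<zeta>(2^k)\<close> for the primitive \<open>2^k\<close>-th root of unity and \<open>w = z\<^sup>2 = \<zeta>(2^(k-1))\<close>.
  The entries of \<open>A\<close> and \<open>B\<close> lie in the field \<open>K = \<rat>(w)\<close>, which is closed under complex
  conjugation and does not contain \<open>z\<close>; hence \<open>1, z\<close> are linearly independent over \<open>K\<close>.
  Since \<open>cnj z = z cnj w\<close>, we have
  \<open>(A + zB)\<^sup>* (A + zB) = (A\<^sup>*A + B\<^sup>*B) + z (A\<^sup>*B + cnj w B\<^sup>*A)\<close>, and comparing
  \<open>K\<close>-coordinates with the identity gives \<open>A\<^sup>*A + B\<^sup>*B = I\<close> and \<open>A\<^sup>*B + cnj w B\<^sup>*A = 0\<close>.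
  These are exactly the block identities for \<open>M = A \<otimes> I + B \<otimes> \<Lambda>\<close> to satisfy \<open>M\<^sup>* M = I\<close>,
  because \<open>\<Lambda>\<^sup>*\<Lambda> = I\<close> and \<open>\<Lambda> = w \<Lambda>\<^sup>*\<close>.

  That \<open>\<zeta>(2^(m+1)) \<notin> \<rat>(\<zeta>(2^m))\<close> is proved along the tower
  \<open>\<rat> \<subset> \<rat>(i) \<subset> \<rat>(\<zeta>(8)) \<subset> \<dots>\<close> of quadratic extensions: a square root of
  \<open>\<zeta>(2^(m+1))\<close> inside \<open>\<rat>(\<zeta>(2^(m+1)))\<close> would yield a rational square root of \<open>1/2\<close>
  (for \<open>m = 1\<close>) or put \<open>\<zeta>(2^(m+1))\<close> back into \<open>\<rat>(\<zeta>(2^m))\<close> (for \<open>m \<ge> 2\<close>).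
\<close>

lemma rat_square_neq_2: "(q::rat)\<^sup>2 \<noteq> 2"
proof
  assume q2: "q\<^sup>2 = 2"
  obtain a b where ab: "quotient_of q = (a, b)" by (cases "quotient_of q")
  have "of_int (a\<^sup>2) = (of_int (2 * b\<^sup>2) :: rat)"
    using q2 quotient_of_denom_pos[OF ab] quotient_of_div[OF ab]
    by (simp add: field_simps power2_eq_square)
  then have eq: "a\<^sup>2 = 2 * b\<^sup>2" by (rule of_int_eq_iff[THEN iffD1])
  then obtain c where c: "a = 2 * c" by (metis dvd_triv_left even_power evenE)
  with eq have "b\<^sup>2 = 2 * c\<^sup>2" by (simp add: power2_eq_square)
  then have "even b" by (metis dvd_triv_left even_power)
  with c have "2 dvd gcd a b" by simp
  with quotient_of_coprime[OF ab] show False by simp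
qed

lemma Rats_double_square_sq_neq_1: "b \<in> \<rat> \<Longrightarrow> (2 * b * b)\<^sup>2 \<noteq> (1::complex)"
proof
  assume b: "b \<in> \<rat>" and eq: "(2 * b * b)\<^sup>2 = 1"
  from b obtain q where q: "b = of_rat q" by (rule Rats_cases)
  have "of_rat ((2 * q * q)\<^sup>2) = (1::complex)" using eq by (simp add: q of_rat_mult of_rat_power)
  then have "(2 * q * q)\<^sup>2 = 1" by simp
  moreover have "2 * q * q \<ge> 0" by simp
  ultimately have "2 * q * q = 1" using power2_eq_1_iff[of "2 * q * q"] by linarith
  then have "(2 * q)\<^sup>2 = 2" by (simp add: power2_eq_square algebra_simps)
  then show False using rat_square_neq_2 by blast
qed

section \<open>Roots of unity of order \<open>2^m\<close>\<close>

lemma zeta_pow2_Suc_square: "zeta (2 ^ Suc m) * zeta (2 ^ Suc m) = zeta (2 ^ m)"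
proof -
  have "zeta (2 ^ Suc m) * zeta (2 ^ Suc m) = exp (2 * (2 * of_real pi * \<i> / of_nat (2 ^ Suc m)))"
    unfolding zeta_def by (simp only: exp_add[symmetric] mult_2)
  also have "2 * (2 * of_real pi * \<i> / of_nat (2 ^ Suc m)) = 2 * of_real pi * \<i> / (of_nat (2 ^ m) :: complex)"
    by simp
  finally show ?thesis unfolding zeta_def .
qed

lemma zeta_1 [simp]: "zeta 1 = 1"
  by (simp add: zeta_def)

lemma zeta_2 [simp]: "zeta 2 = -1"
  by (simp add: zeta_def)

lemma zeta_4 [simp]: "zeta 4 = \<i>"
proof -
  have "zeta 4 = exp (\<i> * of_real (pi / 2))" unfolding zeta_def by (simp add: of_real_divide)
  also have "\<dots> = \<i>" using cis_conv_exp[of "pi / 2"] by simp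
  finally show ?thesis .
qed

lemma cnj_zeta_mult_zeta [simp]: "cnj (zeta n) * zeta n = 1"
proof -
  have "norm (zeta n) = 1" unfolding zeta_def by (simp add: norm_exp_eq_Re)
  then show ?thesis by (metis complex_norm_square mult.commute of_real_1 power_one)
qed

lemma cnj_zeta: "cnj (zeta n) = inverse (zeta n)"
  using cnj_zeta_mult_zeta[of n] by (metis inverse_unique mult.commute)

section \<open>Subfields and quadratic extensions\<close>

text \<open>Since \<open>inverse 0 = 0\<close>, closure under \<open>inverse\<close> needs no side condition.\<close>

definition subfield_set :: "'a::field set \<Rightarrow> bool" where
  "subfield_set K \<longleftrightarrow> 1 \<in> K \<and> (\<forall>x\<in>K. \<forall>y\<in>K. x + y \<in> K \<and> x * y \<in> K)
     \<and> (\<forall>x\<in>K. - x \<in> K \<and> inverse x \<in> K)"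

context
  fixes K :: "'a::field set"
  assumes K: "subfield_set K"
begin

lemma subfield_set_one: "1 \<in> K"
  and subfield_set_add: "x \<in> K \<Longrightarrow> y \<in> K \<Longrightarrow> x + y \<in> K"
  and subfield_set_mult: "x \<in> K \<Longrightarrow> y \<in> K \<Longrightarrow> x * y \<in> K"
  and subfield_set_uminus: "x \<in> K \<Longrightarrow> - x \<in> K"
  and subfield_set_inverse: "x \<in> K \<Longrightarrow> inverse x \<in> K"
  using K by (auto simp: subfield_set_def)

lemma subfield_set_zero: "0 \<in> K"
  using subfield_set_add[OF subfield_set_one subfield_set_uminus[OF subfield_set_one]] by simp

lemma subfield_set_diff: "x \<in> K \<Longrightarrow> y \<in> K \<Longrightarrow> x - y \<in> K"
  using subfield_set_add[of x "- y"] subfield_set_uminus[of y] by simp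

lemma subfield_set_sum: "(\<And>i. i \<in> I \<Longrightarrow> f i \<in> K) \<Longrightarrow> sum f I \<in> K"
  by (induction I rule: infinite_finite_induct) (auto intro: subfield_set_zero subfield_set_add)

end

lemma subfield_set_Rats: "subfield_set (\<rat> :: 'a::field_char_0 set)"
  by (auto simp: subfield_set_def)

definition quad_ext :: "'a::field set \<Rightarrow> 'a \<Rightarrow> 'a set" where
  "quad_ext K s = {a + b * s | a b. a \<in> K \<and> b \<in> K}"

lemma quad_extI: "a \<in> K \<Longrightarrow> b \<in> K \<Longrightarrow> x = a + b * s \<Longrightarrow> x \<in> quad_ext K s"
  by (auto simp: quad_ext_def)

lemma quad_extE:
  assumes "x \<in> quad_ext K s"
  obtains a b where "a \<in> K" "b \<in> K" "x = a + b * s"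
  using assms by (auto simp: quad_ext_def)

lemma subset_quad_ext: "0 \<in> K \<Longrightarrow> K \<subseteq> quad_ext K s"
  by (auto intro: quad_extI[where b = 0])

lemma generator_in_quad_ext: "0 \<in> K \<Longrightarrow> 1 \<in> K \<Longrightarrow> s \<in> quad_ext K s"
  by (auto intro: quad_extI[where a = 0 and b = 1])

context
  fixes K :: "'a::field set" and s :: 'a
  assumes K: "subfield_set K" and s_notin: "s \<notin> K"
begin

lemma quad_ext_coeffs_eq_0:
  assumes "a \<in> K" "b \<in> K" "a + b * s = 0"
  shows "a = 0 \<and> b = 0"
proof (cases "b = 0")
  case False
  then have "s = - a * inverse b" using assms(3) by (simp add: field_simps add_eq_0_iff)
  moreover have "- a * inverse b \<in> K"
    using assms K by (intro subfield_set_mult subfield_set_uminus subfield_set_inverse)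
  ultimately show ?thesis using s_notin by simp
qed (use assms in simp)

lemma subfield_set_quad_ext:
  assumes s2: "s * s \<in> K"
  shows "subfield_set (quad_ext K s)"
  unfolding subfield_set_def
proof (intro conjI ballI)
  note closure = subfield_set_add[OF K] subfield_set_mult[OF K] subfield_set_diff[OF K]
    subfield_set_uminus[OF K] subfield_set_inverse[OF K] s2
  show "1 \<in> quad_ext K s"
    using subset_quad_ext subfield_set_zero[OF K] subfield_set_one[OF K] by blast
  fix x y assume x: "x \<in> quad_ext K s" and y: "y \<in> quad_ext K s"
  from x obtain a b where ab: "a \<in> K" "b \<in> K" and x_eq: "x = a + b * s" by (rule quad_extE)
  from y obtain c e where ce: "c \<in> K" "e \<in> K" and y_eq: "y = c + e * s" by (rule quad_extE)
  show "x + y \<in> quad_ext K s"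
    using ab ce closure by (intro quad_extI[of "a + c" _ "b + e"]) (simp_all add: x_eq y_eq algebra_simps)
  show "x * y \<in> quad_ext K s"
    using ab ce closure by (intro quad_extI[of "a * c + b * e * (s * s)" _ "a * e + b * c"])
      (simp_all add: x_eq y_eq algebra_simps)
  show "- x \<in> quad_ext K s"
    using ab closure by (intro quad_extI[of "- a" _ "- b"]) (simp_all add: x_eq)
  show "inverse x \<in> quad_ext K s"
  proof (cases "x = 0")
    case True
    then show ?thesis using subset_quad_ext subfield_set_zero[OF K] by auto
  next
    case False
    \<comment> \<open>multiply numerator and denominator by the conjugate \<open>a - b s\<close>\<close>
    have "a - b * s \<noteq> 0"
    proof
      assume "a - b * s = 0"
      then have "a = 0 \<and> - b = 0" using quad_ext_coeffs_eq_0[of a "- b"] ab closure by simp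
      then show False using False x_eq by simp
    qed
    define n where "n = a * a - b * b * (s * s)"
    have n_eq: "n = x * (a - b * s)" by (simp add: n_def x_eq algebra_simps)
    have n: "n \<in> K" "n \<noteq> 0"
      using ab closure False \<open>a - b * s \<noteq> 0\<close> by (simp add: n_def, simp add: n_eq)
    have "inverse x = (a - b * s) * inverse n"
      using \<open>a - b * s \<noteq> 0\<close> False by (simp add: n_eq)
    then have "inverse x = a * inverse n + (- b * inverse n) * s"
      by (simp add: algebra_simps)
    moreover have "a * inverse n \<in> K" "- b * inverse n \<in> K"
      using ab n closure by simp_all
    ultimately show ?thesis by (rule quad_extI[rotated 2])
  qed
qed

end

section \<open>The fields \<open>\<rat>(\<zeta>(2^m))\<close>\<close>

text \<open>\<open>cyclotomic2 m\<close> is \<open>\<rat>(\<zeta>(2^m))\<close>, built as a tower of quadratic extensions.\<close>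

fun cyclotomic2 :: "nat \<Rightarrow> complex set" where
  "cyclotomic2 0 = \<rat>"
| "cyclotomic2 (Suc m) = quad_ext (cyclotomic2 m) (zeta (2 ^ Suc m))"

declare cyclotomic2.simps(2) [simp del]

lemma Rats_subset_cyclotomic2: "\<rat> \<subseteq> cyclotomic2 m"
proof (induction m)
  case (Suc m)
  then have "0 \<in> cyclotomic2 m" by (rule subsetD) (rule Rats_0)
  then have "cyclotomic2 m \<subseteq> cyclotomic2 (Suc m)"
    unfolding cyclotomic2.simps(2) by (rule subset_quad_ext)
  with Suc show ?case by (rule order_trans)
qed (simp only: cyclotomic2.simps(1) order_refl)

lemma Rats_in_cyclotomic2: "x \<in> \<rat> \<Longrightarrow> x \<in> cyclotomic2 m"
  using Rats_subset_cyclotomic2 by (rule subsetD)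

lemma cyclotomic2_mono: "m \<le> n \<Longrightarrow> cyclotomic2 m \<subseteq> cyclotomic2 n"
proof (rule lift_Suc_mono_le[of cyclotomic2])
  fix k
  have "0 \<in> cyclotomic2 k" by (rule Rats_in_cyclotomic2) simp
  then show "cyclotomic2 k \<subseteq> cyclotomic2 (Suc k)"
    unfolding cyclotomic2.simps(2) by (rule subset_quad_ext)
qed

lemma zeta_in_cyclotomic2: "zeta (2 ^ m) \<in> cyclotomic2 m"
proof (cases m)
  case (Suc k)
  have "0 \<in> cyclotomic2 k" "1 \<in> cyclotomic2 k" by (rule Rats_in_cyclotomic2, simp)+
  then show ?thesis
    unfolding Suc cyclotomic2.simps(2) by (rule generator_in_quad_ext)
qed (simp add: zeta_1[unfolded One_nat_def])

lemma cyclotomic2_1: "cyclotomic2 1 = \<rat>"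
proof -
  have "quad_ext \<rat> (-1) = (\<rat> :: complex set)"
    unfolding quad_ext_def by (auto, metis Rats_0 diff_zero)
  then show ?thesis by (simp add: cyclotomic2.simps(2))
qed

lemma imaginary_unit_in_cyclotomic2: "2 \<le> m \<Longrightarrow> \<i> \<in> cyclotomic2 m"
  using subsetD[OF cyclotomic2_mono zeta_in_cyclotomic2[of 2]] by simp

lemma cnj_Rats: "x \<in> \<rat> \<Longrightarrow> cnj x = x"
proof (erule Rats_cases)
  fix q assume "x = of_rat q"
  then have "x = of_real (of_rat q)" by (simp add: of_rat_def)
  then show "cnj x = x" by (metis Reals_cnj_iff Reals_of_real)
qed

lemma imaginary_unit_notin_Rats: "\<i> \<notin> \<rat>"
  using cnj_Rats[of \<i>] by auto

text \<open>
  If \<open>\<zeta>(2^(m+2)) = a + b \<zeta>(2^(m+1))\<close>, squaring gives \<open>a\<^sup>2 + b\<^sup>2 \<zeta>(2^m) = 0\<close> and \<open>2ab = 1\<close>,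
  so \<open>c = 2b\<^sup>2\<close> satisfies \<open>c\<^sup>2 \<zeta>(2^m) = -1\<close>.
\<close>

lemma zeta_pow2_notin_cyclotomic2_Suc:
  assumes m: "1 \<le> m" and K: "subfield_set (cyclotomic2 m)"
    and s_notin: "zeta (2 ^ Suc m) \<notin> cyclotomic2 m"
  shows "zeta (2 ^ Suc (Suc m)) \<notin> cyclotomic2 (Suc m)"
proof
  let ?K = "cyclotomic2 m" and ?t = "zeta (2 ^ Suc (Suc m))"
    and ?s = "zeta (2 ^ Suc m)" and ?e = "zeta (2 ^ m)"
  note closure = subfield_set_add[OF K] subfield_set_mult[OF K] subfield_set_diff[OF K]
    subfield_set_uminus[OF K] subfield_set_inverse[OF K] subfield_set_one[OF K]
    zeta_in_cyclotomic2[of m]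
  assume "?t \<in> cyclotomic2 (Suc m)"
  then obtain a b where ab: "a \<in> ?K" "b \<in> ?K" and t: "?t = a + b * ?s"
    by (auto simp: cyclotomic2.simps(2) elim: quad_extE)
  have two: "2 \<in> ?K" by (rule Rats_in_cyclotomic2) simp
  have coeffs_in: "a * a + b * b * ?e \<in> ?K" "2 * a * b - 1 \<in> ?K"
    by (intro closure ab two)+
  have "(a * a + b * b * ?e) + (2 * a * b - 1) * ?s = (a + b * ?s) * (a + b * ?s) - ?s"
    unfolding zeta_pow2_Suc_square[of m, symmetric] by (simp add: algebra_simps)
  also have "\<dots> = 0"
    by (simp only: t[symmetric] zeta_pow2_Suc_square diff_self)
  finally have "a * a + b * b * ?e = 0 \<and> 2 * a * b - 1 = 0"
    by (rule quad_ext_coeffs_eq_0[OF K s_notin coeffs_in])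
  then have sq: "b * b * ?e = - (a * a)" and ab_half: "2 * a * b = 1"
    by (simp_all add: eq_neg_iff_add_eq_0 add.commute)
  define c where "c = 2 * b * b"
  have c_sq: "c * c * ?e = -1"
  proof -
    have "c * c * ?e = 4 * b * b * (b * b * ?e)" by (simp add: c_def algebra_simps)
    also have "\<dots> = - ((2 * a * b) * (2 * a * b))" unfolding sq by (simp add: algebra_simps)
    finally show ?thesis by (simp add: ab_half)
  qed
  show False
  proof (cases "m = 1")
    case True
    then have "b \<in> \<rat>" using ab(2) cyclotomic2_1 by simp
    moreover have "(2 * b * b)\<^sup>2 = 1" using c_sq True by (simp add: c_def power2_eq_square)
    ultimately show False using Rats_double_square_sq_neq_1 by blast
  next
    case False
    have "(c * ?s - \<i>) * (c * ?s + \<i>) = c * c * (?s * ?s) + 1"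
      by (simp add: algebra_simps)
    also have "\<dots> = 0" by (simp only: zeta_pow2_Suc_square c_sq) simp
    finally have "c * ?s = \<i> \<or> c * ?s = - \<i>" by (simp add: eq_neg_iff_add_eq_0)
    moreover have "c \<noteq> 0" using c_sq by auto
    ultimately have "?s = \<i> * inverse c \<or> ?s = - \<i> * inverse c"
      by (auto simp: field_simps)
    moreover have "\<i> * inverse c \<in> ?K" "- \<i> * inverse c \<in> ?K"
      using imaginary_unit_in_cyclotomic2[of m] False m unfolding c_def
      by (intro closure ab two; simp)+
    ultimately show False using s_notin by auto
  qed
qed

lemma subfield_set_cyclotomic2_zeta_notin:
  "1 \<le> m \<Longrightarrow> subfield_set (cyclotomic2 m) \<and> zeta (2 ^ Suc m) \<notin> cyclotomic2 m"
proof (induction m rule: dec_induct)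
  case base
  show ?case
    using subfield_set_Rats imaginary_unit_notin_Rats by (simp add: cyclotomic2_1[unfolded One_nat_def])
next
  case (step m)
  then have K: "subfield_set (cyclotomic2 m)" and s_notin: "zeta (2 ^ Suc m) \<notin> cyclotomic2 m"
    by auto
  have "zeta (2 ^ Suc m) * zeta (2 ^ Suc m) \<in> cyclotomic2 m"
    unfolding zeta_pow2_Suc_square by (rule zeta_in_cyclotomic2)
  then have "subfield_set (cyclotomic2 (Suc m))"
    unfolding cyclotomic2.simps(2) by (rule subfield_set_quad_ext[OF K s_notin])
  moreover have "zeta (2 ^ Suc (Suc m)) \<notin> cyclotomic2 (Suc m)"
    using step.hyps(1) K s_notin by (rule zeta_pow2_notin_cyclotomic2_Suc)
  ultimately show ?case ..
qed

lemma subfield_set_cyclotomic2: "subfield_set (cyclotomic2 m)"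
  using subfield_set_cyclotomic2_zeta_notin[of m] subfield_set_Rats
  by (cases m) auto

lemma cnj_in_cyclotomic2: "x \<in> cyclotomic2 m \<Longrightarrow> cnj x \<in> cyclotomic2 m"
proof (induction m arbitrary: x)
  case 0
  then show ?case by (simp add: cnj_Rats)
next
  case (Suc m)
  let ?s = "zeta (2 ^ Suc m)" and ?L = "cyclotomic2 (Suc m)"
  note L = subfield_set_cyclotomic2[of "Suc m"]
  obtain a b where ab: "a \<in> cyclotomic2 m" "b \<in> cyclotomic2 m" and x: "x = a + b * ?s"
    using Suc.prems unfolding cyclotomic2.simps(2) by (rule quad_extE)
  have "cnj x = cnj a + cnj b * inverse ?s" by (simp add: x cnj_zeta)
  moreover have "cnj a \<in> ?L" "cnj b \<in> ?L"
    using Suc.IH ab cyclotomic2_mono[of m "Suc m"] by auto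
  moreover have "inverse ?s \<in> ?L"
    using L zeta_in_cyclotomic2 by (rule subfield_set_inverse)
  ultimately show ?case
    using L by (simp add: subfield_set_add subfield_set_mult)
qed

lemma Zhalf_zeta_subset_cyclotomic2: "Zhalf_zeta (2 ^ m) \<subseteq> cyclotomic2 m"
proof
  note K = subfield_set_cyclotomic2[of m]
  show "x \<in> cyclotomic2 m" if "x \<in> Zhalf_zeta (2 ^ m)" for x
    using that
  proof (induction rule: Zhalf_zeta.induct)
    case one show ?case using K by (rule subfield_set_one)
    case half show ?case by (rule Rats_in_cyclotomic2) simp
    case root show ?case by (rule zeta_in_cyclotomic2)
    case add then show ?case using K by (simp add: subfield_set_add)
    case neg then show ?case using K by (simp add: subfield_set_uminus)
    case mult then show ?case using K by (simp add: subfield_set_mult)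
  qed
qed

section \<open>Adjoints and Kronecker products\<close>

lemma adjoint_mat_dims [simp]:
  "dim_row (adjoint_mat M) = dim_col M" "dim_col (adjoint_mat M) = dim_row M"
  by (simp_all add: adjoint_mat_def)

lemma adjoint_mat_carrier: "M \<in> carrier_mat r c \<Longrightarrow> adjoint_mat M \<in> carrier_mat c r"
  by auto

lemma index_adjoint_mat [simp]:
  "i < dim_col M \<Longrightarrow> j < dim_row M \<Longrightarrow> adjoint_mat M $$ (i, j) = cnj (M $$ (j, i))"
  by (simp add: adjoint_mat_def)

lemma index_adjoint_mult_mat:
  assumes "dim_row B = dim_row A" "i < dim_col A" "j < dim_col B"
  shows "(adjoint_mat A * B) $$ (i, j) = (\<Sum>l<dim_row A. cnj (A $$ (l, i)) * B $$ (l, j))"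
  using assms by (simp add: scalar_prod_def atLeast0LessThan)

lemma adjoint_mat_add:
  "dim_row A = dim_row B \<Longrightarrow> dim_col A = dim_col B \<Longrightarrow>
    adjoint_mat (A + B) = adjoint_mat A + adjoint_mat B"
  by (rule eq_matI) auto

lemma adjoint_one_mat [simp]: "adjoint_mat (1\<^sub>m n) = 1\<^sub>m n"
  by (rule eq_matI) auto

lemma kron_dims [simp]:
  "dim_row (kron A B) = dim_row A * dim_row B" "dim_col (kron A B) = dim_col A * dim_col B"
  by (simp_all add: kron_def)

lemma index_kron [simp]:
  "i < dim_row A * dim_row B \<Longrightarrow> j < dim_col A * dim_col B \<Longrightarrow>
    kron A B $$ (i, j) = A $$ (i div dim_row B, j div dim_col B) * B $$ (i mod dim_row B, j mod dim_col B)"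
  by (simp add: kron_def)

lemma mult_add_less_mult_nat:
  fixes l m n u :: nat
  assumes "l < m" "u < n"
  shows "l * n + u < m * n"
proof -
  have "l * n + u < Suc l * n" using assms(2) by simp
  also have "\<dots> \<le> m * n" using assms(1) by (intro mult_le_mono1) simp
  finally show ?thesis .
qed

lemma kron_carrier_mat:
  "A \<in> carrier_mat m n \<Longrightarrow> B \<in> carrier_mat p q \<Longrightarrow> kron A B \<in> carrier_mat (m * p) (n * q)"
  by auto

lemma sum_lessThan_mult_nat:
  fixes m n :: nat
  shows "(\<Sum>t<m * n. f t) = (\<Sum>l<m. \<Sum>u<n. f (l * n + u))"
proof -
  have "(\<Sum>t<m * n. f t) = (\<Sum>l<m. sum f {l * n..<l * n + n})"
    using sum.nat_group[of f n m] by simp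
  also have "\<dots> = (\<Sum>l<m. \<Sum>u<n. f (l * n + u))"
    using sum.atLeastLessThan_shift_bounds[of f 0 "_ * n" n]
    by (simp add: atLeast0LessThan add.commute comp_def)
  finally show ?thesis .
qed

lemma adjoint_kron_mult_kron:
  assumes "dim_row B = dim_row A" "dim_row D = dim_row C"
  shows "adjoint_mat (kron A C) * kron B D = kron (adjoint_mat A * B) (adjoint_mat C * D)"
proof (rule eq_matI)
  fix x y
  assume "x < dim_row (kron (adjoint_mat A * B) (adjoint_mat C * D))"
    and "y < dim_col (kron (adjoint_mat A * B) (adjoint_mat C * D))"
  then have x: "x < dim_col A * dim_col C" and y: "y < dim_col B * dim_col D" by simp_all
  let ?i = "x div dim_col C" and ?r = "x mod dim_col C"
    and ?j = "y div dim_col D" and ?s = "y mod dim_col D"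
  have i: "?i < dim_col A" and j: "?j < dim_col B"
    using x y by (simp_all add: less_mult_imp_div_less)
  have "dim_col C > 0" "dim_col D > 0" using x y by (auto intro: gr0I)
  then have r: "?r < dim_col C" and s: "?s < dim_col D" by simp_all
  have "(adjoint_mat (kron A C) * kron B D) $$ (x, y)
      = (\<Sum>t<dim_row (kron A C). cnj (kron A C $$ (t, x)) * kron B D $$ (t, y))"
    by (rule index_adjoint_mult_mat) (use assms x y in simp_all)
  also have "\<dots> = (\<Sum>l<dim_row A. \<Sum>u<dim_row C.
           cnj (A $$ (l, ?i) * C $$ (u, ?r)) * (B $$ (l, ?j) * D $$ (u, ?s)))"
    unfolding kron_dims sum_lessThan_mult_nat using assms x y
    by (intro sum.cong refl) (simp add: mult_add_less_mult_nat)
  also have "\<dots> = (\<Sum>l<dim_row A. cnj (A $$ (l, ?i)) * B $$ (l, ?j))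
      * (\<Sum>u<dim_row C. cnj (C $$ (u, ?r)) * D $$ (u, ?s))"
    by (simp add: sum_product algebra_simps)
  also have "\<dots> = kron (adjoint_mat A * B) (adjoint_mat C * D) $$ (x, y)"
    using assms x y i j r s by (simp add: index_adjoint_mult_mat del: index_mult_mat(1))
  finally show "(adjoint_mat (kron A C) * kron B D) $$ (x, y)
      = kron (adjoint_mat A * B) (adjoint_mat C * D) $$ (x, y)" .
qed (use assms in simp_all)

lemma adjoint_mult_add_smult:
  assumes A: "A \<in> carrier_mat n d" and B: "B \<in> carrier_mat n d" and z: "cnj z * z = 1"
  shows "adjoint_mat (A + z \<cdot>\<^sub>m B) * (A + z \<cdot>\<^sub>m B)
    = (adjoint_mat A * A + adjoint_mat B * B)
      + z \<cdot>\<^sub>m (adjoint_mat A * B + cnj (z * z) \<cdot>\<^sub>m (adjoint_mat B * A))"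
proof (rule eq_matI)
  fix i j assume "i < dim_row (adjoint_mat A * A + adjoint_mat B * B
      + z \<cdot>\<^sub>m (adjoint_mat A * B + cnj (z * z) \<cdot>\<^sub>m (adjoint_mat B * A)))"
    and "j < dim_col (adjoint_mat A * A + adjoint_mat B * B
      + z \<cdot>\<^sub>m (adjoint_mat A * B + cnj (z * z) \<cdot>\<^sub>m (adjoint_mat B * A)))"
  then have ij: "i < d" "j < d" using A B by auto
  have "cnj (a + z * b) * (c + z * e)
      = (cnj a * c + cnj b * e) + z * (cnj a * e + cnj (z * z) * (cnj b * c))" for a b c e
    using z by (simp add: algebra_simps)
  then show "(adjoint_mat (A + z \<cdot>\<^sub>m B) * (A + z \<cdot>\<^sub>m B)) $$ (i, j)
      = (adjoint_mat A * A + adjoint_mat B * B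
      + z \<cdot>\<^sub>m (adjoint_mat A * B + cnj (z * z) \<cdot>\<^sub>m (adjoint_mat B * A))) $$ (i, j)"
    using A B ij
    by (simp add: index_adjoint_mult_mat sum.distrib sum_distrib_left distrib_left
        del: index_mult_mat(1))
qed (use A B in simp_all)

lemma adjoint_mult_mat_entry_in:
  assumes K: "subfield_set K" and cnjK: "\<And>x. x \<in> K \<Longrightarrow> cnj x \<in> K"
    and X: "X \<in> carrier_mat n a" "entries_in X K" and Y: "Y \<in> carrier_mat n b" "entries_in Y K"
    and ij: "i < a" "j < b"
  shows "(adjoint_mat X * Y) $$ (i, j) \<in> K"
proof -
  have "(adjoint_mat X * Y) $$ (i, j) = (\<Sum>l<n. cnj (X $$ (l, i)) * Y $$ (l, j))"
    using X Y ij by (subst index_adjoint_mult_mat) simp_all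
  also have "\<dots> \<in> K"
    using X Y ij unfolding entries_in_def
    by (intro subfield_set_sum[OF K] subfield_set_mult[OF K] cnjK) auto
  finally show ?thesis .
qed

lemma unitary_add_smult_components:
  assumes K: "subfield_set K" and cnjK: "\<And>x. x \<in> K \<Longrightarrow> cnj x \<in> K"
    and z_notin: "z \<notin> K" and zz: "z * z \<in> K" and z: "cnj z * z = 1"
    and A: "A \<in> carrier_mat d d" "entries_in A K" and B: "B \<in> carrier_mat d d" "entries_in B K"
    and U: "unitary_mat (A + z \<cdot>\<^sub>m B)"
  shows "adjoint_mat A * A + adjoint_mat B * B = 1\<^sub>m d"
    and "adjoint_mat A * B + cnj (z * z) \<cdot>\<^sub>m (adjoint_mat B * A) = 0\<^sub>m d d"
proof -
  let ?P = "adjoint_mat A * A + adjoint_mat B * B"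
    and ?Q = "adjoint_mat A * B + cnj (z * z) \<cdot>\<^sub>m (adjoint_mat B * A)"
  have "adjoint_mat (A + z \<cdot>\<^sub>m B) * (A + z \<cdot>\<^sub>m B) = 1\<^sub>m d"
    using U A B unfolding unitary_mat_def by auto
  then have PQ: "?P + z \<cdot>\<^sub>m ?Q = 1\<^sub>m d"
    unfolding adjoint_mult_add_smult[OF A(1) B(1) z] .
  have PQ_entries: "?P $$ (i, j) - (if i = j then 1 else 0) = 0 \<and> ?Q $$ (i, j) = 0"
    if ij: "i < d" "j < d" for i j
  proof (rule quad_ext_coeffs_eq_0[OF K z_notin])
    note entry_in = adjoint_mult_mat_entry_in[OF K cnjK]
    have "?P $$ (i, j) \<in> K"
      using A B ij by (simp add: subfield_set_add[OF K] entry_in del: index_mult_mat(1))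
    then show "?P $$ (i, j) - (if i = j then 1 else 0) \<in> K"
      using subfield_set_diff[OF K] subfield_set_zero[OF K] subfield_set_one[OF K] by simp
    show "?Q $$ (i, j) \<in> K"
      using A B ij cnjK[OF zz]
      by (simp add: subfield_set_add[OF K] subfield_set_mult[OF K] entry_in del: index_mult_mat(1))
    have "(?P + z \<cdot>\<^sub>m ?Q) $$ (i, j) = 1\<^sub>m d $$ (i, j)" using PQ by simp
    then show "?P $$ (i, j) - (if i = j then 1 else 0) + ?Q $$ (i, j) * z = 0"
      using A B ij by (simp add: algebra_simps del: index_mult_mat(1))
  qed
  show "?P = 1\<^sub>m d" using A B PQ_entries by (intro eq_matI) simp_all
  show "?Q = 0\<^sub>m d d" using A B PQ_entries by (intro eq_matI) simp_all
qed

lemma adjoint_mult_kron_add_kron: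
  assumes A: "A \<in> carrier_mat m n" and B: "B \<in> carrier_mat m n"
    and C: "C \<in> carrier_mat p q" and D: "D \<in> carrier_mat p q"
  shows "adjoint_mat (kron A C + kron B D) * (kron A C + kron B D)
    = kron (adjoint_mat A * A) (adjoint_mat C * C) + kron (adjoint_mat A * B) (adjoint_mat C * D)
      + (kron (adjoint_mat B * A) (adjoint_mat D * C) + kron (adjoint_mat B * B) (adjoint_mat D * D))"
proof -
  have kron: "kron A C \<in> carrier_mat (m * p) (n * q)" "kron B D \<in> carrier_mat (m * p) (n * q)"
    using A B C D by (simp_all add: kron_carrier_mat)
  then have adj: "adjoint_mat (kron A C) \<in> carrier_mat (n * q) (m * p)"
    "adjoint_mat (kron B D) \<in> carrier_mat (n * q) (m * p)"
    by (simp_all add: adjoint_mat_carrier)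
  have "adjoint_mat (kron A C + kron B D) * (kron A C + kron B D)
    = (adjoint_mat (kron A C) + adjoint_mat (kron B D)) * (kron A C + kron B D)"
    using A B C D by (subst adjoint_mat_add) auto
  also have "\<dots> = adjoint_mat (kron A C) * (kron A C + kron B D)
      + adjoint_mat (kron B D) * (kron A C + kron B D)"
    using kron adj by (intro add_mult_distrib_mat[where nc = "n * q"]) auto
  also have "\<dots> = (adjoint_mat (kron A C) * kron A C + adjoint_mat (kron A C) * kron B D)
      + (adjoint_mat (kron B D) * kron A C + adjoint_mat (kron B D) * kron B D)"
    using kron adj by (simp add: mult_add_distrib_mat[of _ "n * q" "m * p" _ "n * q"])
  also have "\<dots> = kron (adjoint_mat A * A) (adjoint_mat C * C)
      + kron (adjoint_mat A * B) (adjoint_mat C * D)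
      + (kron (adjoint_mat B * A) (adjoint_mat D * C) + kron (adjoint_mat B * B) (adjoint_mat D * D))"
    using A B C D by (simp add: adjoint_kron_mult_kron)
  finally show ?thesis .
qed

section \<open>Unitarity of \<open>A \<otimes> I + B \<otimes> \<Lambda>\<close>\<close>

lemma Lambda_carrier: "Lambda k \<in> carrier_mat 2 2"
  by (simp add: Lambda_def)

lemma adjoint_Lambda_mult_Lambda: "adjoint_mat (Lambda k) * Lambda k = 1\<^sub>m 2"
  by (rule eq_matI) (auto simp: Lambda_def scalar_prod_def less_2_cases_iff numeral_2_eq_2)

lemma Lambda_eq_smult_adjoint: "Lambda k = zeta (2 ^ (k - 1)) \<cdot>\<^sub>m adjoint_mat (Lambda k)"
  by (rule eq_matI) (auto simp: Lambda_def less_2_cases_iff mult.commute[of _ "cnj _"])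

lemma adjoint_mult_kron_one_add_kron_Lambda:
  assumes A: "A \<in> carrier_mat d d" and B: "B \<in> carrier_mat d d"
  shows "adjoint_mat (kron A (1\<^sub>m 2) + kron B (Lambda k)) * (kron A (1\<^sub>m 2) + kron B (Lambda k))
    = kron (adjoint_mat A * A) (1\<^sub>m 2) + kron (adjoint_mat A * B) (Lambda k)
      + (kron (adjoint_mat B * A) (adjoint_mat (Lambda k)) + kron (adjoint_mat B * B) (1\<^sub>m 2))"
  using adjoint_mult_kron_add_kron[OF A B one_carrier_mat Lambda_carrier]
  by (simp add: adjoint_Lambda_mult_Lambda left_mult_one_mat[OF Lambda_carrier]
      right_mult_one_mat[OF adjoint_mat_carrier[OF Lambda_carrier]])

lemma kron_gram_Lambda_eq_one:
  assumes A: "A \<in> carrier_mat d d" and B: "B \<in> carrier_mat d d"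
    and gram: "adjoint_mat A * A + adjoint_mat B * B = 1\<^sub>m d"
    and cross: "adjoint_mat A * B + cnj (zeta (2 ^ (k - 1))) \<cdot>\<^sub>m (adjoint_mat B * A) = 0\<^sub>m d d"
  shows "kron (adjoint_mat A * A) (1\<^sub>m 2) + kron (adjoint_mat A * B) (Lambda k)
      + (kron (adjoint_mat B * A) (adjoint_mat (Lambda k)) + kron (adjoint_mat B * B) (1\<^sub>m 2))
    = 1\<^sub>m (d * 2)" (is "?G = _")
proof (rule eq_matI)
  let ?X = "adjoint_mat A * B" and ?Y = "adjoint_mat B * A" and ?L = "adjoint_mat (Lambda k)"
  define w where "w = zeta (2 ^ (k - 1))"
  fix x y assume "x < dim_row (1\<^sub>m (d * 2))" "y < dim_col (1\<^sub>m (d * 2))"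
  then have xy: "x < d * 2" "y < d * 2" by simp_all
  define i j r s where "i = x div 2" "j = y div 2" "r = x mod 2" "s = y mod 2"
  have ij: "i < d" "j < d" and rs: "r < 2" "s < 2"
    using xy by (auto simp: i_j_r_s_def)
  have "x = y \<longleftrightarrow> i = j \<and> r = s"
    unfolding i_j_r_s_def by (metis div_mult_mod_eq)
  then have one: "1\<^sub>m (d * 2) $$ (x, y) = (1\<^sub>m d $$ (i, j) * 1\<^sub>m 2 $$ (r, s) :: complex)"
    using xy ij rs by simp
  \<comment> \<open>the two cross terms cancel: \<open>\<Lambda> = w \<Lambda>\<^sup>*\<close> and \<open>B\<^sup>*A = - w A\<^sup>*B\<close>\<close>
  have Y: "?Y $$ (i, j) = - w * ?X $$ (i, j)"
  proof -
    have "?X $$ (i, j) + cnj w * ?Y $$ (i, j) = 0"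
      using arg_cong[OF cross, of "\<lambda>N. N $$ (i, j)"] A B ij by (simp add: w_def)
    then have "w * ?X $$ (i, j) + (cnj w * w) * ?Y $$ (i, j) = 0"
      by (metis mult_zero_right distrib_left mult.assoc mult.commute)
    then show ?thesis by (simp add: w_def eq_neg_iff_add_eq_0 add.commute)
  qed
  have L: "Lambda k $$ (r, s) = w * ?L $$ (r, s)"
    using arg_cong[OF Lambda_eq_smult_adjoint, of "\<lambda>N. N $$ (r, s)"] rs
    using carrier_matD[OF Lambda_carrier[of k]] by (simp add: w_def)
  have AB: "(adjoint_mat A * A) $$ (i, j) + (adjoint_mat B * B) $$ (i, j) = 1\<^sub>m d $$ (i, j)"
    using arg_cong[OF gram, of "\<lambda>N. N $$ (i, j)"] A B ij by simp
  have "?G $$ (x, y)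
      = ((adjoint_mat A * A) $$ (i, j) + (adjoint_mat B * B) $$ (i, j)) * 1\<^sub>m 2 $$ (r, s)
        + (?X $$ (i, j) * Lambda k $$ (r, s) + ?Y $$ (i, j) * ?L $$ (r, s))"
    using A B xy carrier_matD[OF Lambda_carrier[of k]]
    by (simp add: i_j_r_s_def[symmetric] algebra_simps del: index_mult_mat(1) index_one_mat(1))
  also have "\<dots> = 1\<^sub>m (d * 2) $$ (x, y)"
    unfolding AB Y L one by (simp add: algebra_simps)
  finally show "?G $$ (x, y) = 1\<^sub>m (d * 2) $$ (x, y)" .
qed (simp_all add: carrier_matD[OF A] carrier_matD[OF B])

lemma unitary_kron_one_add_kron_Lambda:
  assumes A: "A \<in> carrier_mat d d" and B: "B \<in> carrier_mat d d"
    and gram: "adjoint_mat A * A + adjoint_mat B * B = 1\<^sub>m d"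
    and cross: "adjoint_mat A * B + cnj (zeta (2 ^ (k - 1))) \<cdot>\<^sub>m (adjoint_mat B * A) = 0\<^sub>m d d"
  shows "unitary_mat (kron A (1\<^sub>m 2) + kron B (Lambda k))"
proof -
  let ?M = "kron A (1\<^sub>m 2) + kron B (Lambda k)"
  have M: "?M \<in> carrier_mat (d * 2) (d * 2)"
    using A B Lambda_carrier by (intro add_carrier_mat kron_carrier_mat) auto
  have MM: "adjoint_mat ?M * ?M = 1\<^sub>m (d * 2)"
    unfolding adjoint_mult_kron_one_add_kron_Lambda[OF A B]
    by (rule kron_gram_Lambda_eq_one[OF A B gram cross])
  moreover have "?M * adjoint_mat ?M = 1\<^sub>m (d * 2)"
    using adjoint_mat_carrier[OF M] M MM by (rule mat_mult_left_right_inverse)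
  ultimately show ?thesis using M unfolding unitary_mat_def by blast
qed

lemma entries_in_add:
  assumes "dim_row A = dim_row B" "dim_col A = dim_col B" "entries_in A S" "entries_in B S"
    and "\<And>x y. x \<in> S \<Longrightarrow> y \<in> S \<Longrightarrow> x + y \<in> S"
  shows "entries_in (A + B) S"
  using assms unfolding entries_in_def by simp

lemma entries_in_kron:
  assumes "entries_in A S" "entries_in B S"
    and "\<And>x y. x \<in> S \<Longrightarrow> y \<in> S \<Longrightarrow> x * y \<in> S"
  shows "entries_in (kron A B) S"
  unfolding entries_in_def
proof (intro allI impI)
  fix i j assume "i < dim_row (kron A B)" "j < dim_col (kron A B)"
  then have i: "i < dim_row A * dim_row B" and j: "j < dim_col A * dim_col B" by simp_all
  then have "dim_row B > 0" "dim_col B > 0" by (auto intro: gr0I)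
  with i j have "i div dim_row B < dim_row A" "j div dim_col B < dim_col A"
    "i mod dim_row B < dim_row B" "j mod dim_col B < dim_col B"
    by (simp_all add: less_mult_imp_div_less)
  with i j assms show "kron A B $$ (i, j) \<in> S" unfolding entries_in_def by simp
qed

lemma zero_in_Zhalf_zeta: "0 \<in> Zhalf_zeta n"
  using Zhalf_zeta.add[OF Zhalf_zeta.one Zhalf_zeta.neg[OF Zhalf_zeta.one]] by simp

lemma entries_in_one_mat_Zhalf_zeta: "entries_in (1\<^sub>m n) (Zhalf_zeta m)"
  unfolding entries_in_def using Zhalf_zeta.one zero_in_Zhalf_zeta by simp

lemma entries_in_Lambda: "entries_in (Lambda k) (Zhalf_zeta (2 ^ (k - 1)))"
  unfolding entries_in_def Lambda_def using Zhalf_zeta.one Zhalf_zeta.root zero_in_Zhalf_zeta by simp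

theorem lemma2:
  fixes k d :: nat and A B :: "complex mat"
  assumes "k \<ge> 2"
    and "A \<in> carrier_mat d d" and "B \<in> carrier_mat d d"
    and "entries_in A (Zhalf_zeta (2 ^ (k - 1)))"
    and "entries_in B (Zhalf_zeta (2 ^ (k - 1)))"
    and "unitary_mat (A + zeta (2 ^ k) \<cdot>\<^sub>m B)"
  shows "unitary_mat (kron A (1\<^sub>m 2) + kron B (Lambda k))
       \<and> entries_in (kron A (1\<^sub>m 2) + kron B (Lambda k)) (Zhalf_zeta (2 ^ (k - 1)))"
proof
  define m where "m = k - 1"
  have k: "k = Suc m" "1 \<le> m" using assms(1) by (simp_all add: m_def)
  have K: "subfield_set (cyclotomic2 m)" and z_notin: "zeta (2 ^ k) \<notin> cyclotomic2 m"
    using subfield_set_cyclotomic2_zeta_notin[OF k(2)] k(1) by simp_all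
  have zz: "zeta (2 ^ k) * zeta (2 ^ k) = zeta (2 ^ m)"
    unfolding k(1) by (rule zeta_pow2_Suc_square)
  have zz_in: "zeta (2 ^ k) * zeta (2 ^ k) \<in> cyclotomic2 m"
    unfolding zz by (rule zeta_in_cyclotomic2)
  have AK: "entries_in A (cyclotomic2 m)" and BK: "entries_in B (cyclotomic2 m)"
    using assms(4,5) Zhalf_zeta_subset_cyclotomic2 unfolding entries_in_def m_def by blast+
  note components = unitary_add_smult_components[OF K cnj_in_cyclotomic2 z_notin zz_in
      cnj_zeta_mult_zeta assms(2) AK assms(3) BK assms(6)]
  show "unitary_mat (kron A (1\<^sub>m 2) + kron B (Lambda k))"
    using components unfolding zz m_def by (rule unitary_kron_one_add_kron_Lambda[OF assms(2,3)])
  show "entries_in (kron A (1\<^sub>m 2) + kron B (Lambda k)) (Zhalf_zeta (2 ^ (k - 1)))"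
    using assms(2-5) Lambda_carrier[of k] entries_in_one_mat_Zhalf_zeta entries_in_Lambda
    by (intro entries_in_add entries_in_kron) (auto intro: Zhalf_zeta.add Zhalf_zeta.mult)
qed

end
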